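(* Let $\mathcal{P}_s=\{(M,A,U)\in\mathbb{R}^3_+:\gamma M=A\}$, $\mathbb{M}_a=\{\gamma M>A\}$, $\mathbb{M}_s=\{\gamma M<A\}$ (subsets of $\mathbb{R}^3_+$). (i) If $\mathcal{N}_F>1$, then $\mathbf{E}_1^*\in\mathcal{P}_s$ iff $\mathcal{N}_M=\mathcal{N}_F$, $\mathbf{E}_1^*\in\mathbb{M}_a$ iff $\mathcal{N}_M>\mathcal{N}_F$, and $\mathbf{E}_1^*\in\mathbb{M}_s$ iff $\mathcal{N}_M<\mathcal{N}_F$. (ii) If $\mathcal{N}_M>1$ and $\theta_M>1$, then $\mathbf{E}_2^*\in\mathcal{P}_s$ iff $\mathcal{N}_M=\mathcal{N}_F$, $\mathbf{E}_2^*\in\mathbb{M}_s$ iff $\mathcal{N}_F>\mathcal{N}_M$, and $\mathbf{E}_2^*\in\mathbb{M}_a$ iff $\mathcal{N}_M>\mathcal{N}_F$. (iii) If $\mathcal{N}_M=\mathcal{N}_F>1$, then $\mathbf{E}_1^*=\mathbf{E}_2^*\in\mathcal{P}_s$. Consequently $\mathbf{E}_1^*$ is a regular equilibrium of the piecewise smooth natural system when $\mathcal{N}_M>\mathcal{N}_F>1$, and $\mathbf{E}_2^*$ is a regular equilibrium when $\mathcal{N}_F>\mathcal{N}_M>1$ (with $\theta_M>1$).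
   Context: Parameters: $r\in(0,1)$, $\rho,\sigma,\mu,\delta,\nu,\eta>0$, $\gamma\ge1$. $\mathcal{N}_M:=\frac{\gamma r\rho\nu}{\mu(\delta+\eta)}$, $\mathcal{N}_F:=\frac{(1-r)\rho\nu}{\delta(\delta+\eta+\nu)}$, $\theta_M:=\frac{(1-r)\mu(\delta+\eta)}{\gamma r\delta\nu}$, $\vartheta:=(1-r)\mu+r\delta$. $\mathbf{E}_1^*=(M_1^*,A_1^*,U_1^* )$ with $M_1^*=r\frac{\delta}{\vartheta}\frac{1}{\sigma}\ln\mathcal{N}_F$, $A_1^*=(1-r)\frac{\mu}{\vartheta}\frac{\delta+\eta}{\delta+\eta+\nu}\frac1\sigma\ln\mathcal{N}_F$, $U_1^*=(1-r)\frac{\mu}{\vartheta}\frac{\nu}{\delta+\eta+\nu}\frac1\sigma\ln\mathcal{N}_F$. $\mathbf{E}_2^*=(M_2^*,A_2^*,U_2^* )$ with $M_2^*=\frac{\delta+\eta}{\gamma\nu\theta_M+\eta+\delta}\frac1\sigma\ln\mathcal{N}_M$, $A_2^*=\frac{\gamma\nu(\theta_M-1)}{\gamma\nu\theta_M+\eta+\delta}\frac1\sigma\ln\mathcal{N}_M$, $U_2^*=\frac{\gamma\nu}{\gamma\nu\theta_M+\eta+\delta}\frac1\sigma\ln\mathcal{N}_M$. The natural piecewise smooth system uses the vector field $\Phi_1$ on $\mathbb{M}_a$ and $\Phi_2$ on $\mathbb{M}_s$, where $\Phi_1=\big(r\rho Ue^{-\sigma S}-\mu M,(1-r)\rho Ue^{-\sigma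 S}-\nu A+\eta U-\delta A,\nu A-(\eta+\delta)U\big)$ and $\Phi_2=\big(r\rho Ue^{-\sigma S}-\mu M,(1-r)\rho Ue^{-\sigma S}-\nu\gamma M+\eta U-\delta A,\nu\gamma M-(\eta+\delta)U\big)$, $S=M+A+U$; a regular equilibrium is a zero of $\Phi_1$ lying in $\mathbb{M}_a$ or of $\Phi_2$ lying in $\mathbb{M}_s$. *)

theory Defs
  imports Complex_Main
begin

definition NM :: "real \<Rightarrow> real \<Rightarrow> real \<Rightarrow> real \<Rightarrow> real \<Rightarrow> real \<Rightarrow> real \<Rightarrow> real \<Rightarrow> real" where
  "NM r \<rho> \<sigma> \<mu> \<delta> \<nu> \<eta> \<gamma> = \<gamma> * r * \<rho> * \<nu> / (\<mu> * (\<delta> + \<eta>))"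

definition NF :: "real \<Rightarrow> real \<Rightarrow> real \<Rightarrow> real \<Rightarrow> real \<Rightarrow> real \<Rightarrow> real \<Rightarrow> real \<Rightarrow> real" where
  "NF r \<rho> \<sigma> \<mu> \<delta> \<nu> \<eta> \<gamma> = (1 - r) * \<rho> * \<nu> / (\<delta> * (\<delta> + \<eta> + \<nu>))"

definition thetaM :: "real \<Rightarrow> real \<Rightarrow> real \<Rightarrow> real \<Rightarrow> real \<Rightarrow> real \<Rightarrow> real \<Rightarrow> real \<Rightarrow> real" where
  "thetaM r \<rho> \<sigma> \<mu> \<delta> \<nu> \<eta> \<gamma> = (1 - r) * \<mu> * (\<delta> + \<eta>) / (\<gamma> * r * \<delta> * \<nu>)"

definition vartheta :: "real \<Rightarrow> real \<Rightarrow> real \<Rightarrow> real" where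
  "vartheta r \<mu> \<delta> = (1 - r) * \<mu> + r * \<delta>"

definition E1 :: "real \<Rightarrow> real \<Rightarrow> real \<Rightarrow> real \<Rightarrow> real \<Rightarrow> real \<Rightarrow> real \<Rightarrow> real \<Rightarrow> real \<times> real \<times> real" where
  "E1 r \<rho> \<sigma> \<mu> \<delta> \<nu> \<eta> \<gamma> =
     (let L = (1 / \<sigma>) * ln (NF r \<rho> \<sigma> \<mu> \<delta> \<nu> \<eta> \<gamma>); th = vartheta r \<mu> \<delta> in
      (r * (\<delta> / th) * L,
       (1 - r) * (\<mu> / th) * ((\<delta> + \<eta>) / (\<delta> + \<eta> + \<nu>)) * L,
       (1 - r) * (\<mu> / th) * (\<nu> / (\<delta> + \<eta> + \<nu>)) * L))"

definition E2 :: "real \<Rightarrow> real \<Rightarrow> real \<Rightarrow> real \<Rightarrow> real \<Rightarrow> real \<Rightarrow> real \<Rightarrow> real \<Rightarrow> real \<times> real \<times> real" where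
  "E2 r \<rho> \<sigma> \<mu> \<delta> \<nu> \<eta> \<gamma> =
     (let L = (1 / \<sigma>) * ln (NM r \<rho> \<sigma> \<mu> \<delta> \<nu> \<eta> \<gamma>);
          \<theta> = thetaM r \<rho> \<sigma> \<mu> \<delta> \<nu> \<eta> \<gamma>;
          D = \<gamma> * \<nu> * \<theta> + \<eta> + \<delta> in
      ((\<delta> + \<eta>) / D * L,
       \<gamma> * \<nu> * (\<theta> - 1) / D * L,
       \<gamma> * \<nu> / D * L))"

definition Rplus3 :: "(real \<times> real \<times> real) set" where
  "Rplus3 = {(M, A, U). 0 \<le> M \<and> 0 \<le> A \<and> 0 \<le> U}"

definition Ps :: "real \<Rightarrow> (real \<times> real \<times> real) set" where
  "Ps \<gamma> = {(M, A, U). (M, A, U) \<in> Rplus3 \<and> \<gamma> * M = A}"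

definition Ma :: "real \<Rightarrow> (real \<times> real \<times> real) set" where
  "Ma \<gamma> = {(M, A, U). (M, A, U) \<in> Rplus3 \<and> \<gamma> * M > A}"

definition Ms :: "real \<Rightarrow> (real \<times> real \<times> real) set" where
  "Ms \<gamma> = {(M, A, U). (M, A, U) \<in> Rplus3 \<and> \<gamma> * M < A}"

definition Phi1 :: "real \<Rightarrow> real \<Rightarrow> real \<Rightarrow> real \<Rightarrow> real \<Rightarrow> real \<Rightarrow> real \<Rightarrow> real \<Rightarrow>
    real \<times> real \<times> real \<Rightarrow> real \<times> real \<times> real" where
  "Phi1 r \<rho> \<sigma> \<mu> \<delta> \<nu> \<eta> \<gamma> x = (case x of (M, A, U) \<Rightarrow>
     (let S = M + A + U in
      (r * \<rho> * U * exp (- \<sigma> * S) - \<mu> * M,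
       (1 - r) * \<rho> * U * exp (- \<sigma> * S) - \<nu> * A + \<eta> * U - \<delta> * A,
       \<nu> * A - (\<eta> + \<delta>) * U)))"

definition Phi2 :: "real \<Rightarrow> real \<Rightarrow> real \<Rightarrow> real \<Rightarrow> real \<Rightarrow> real \<Rightarrow> real \<Rightarrow> real \<Rightarrow>
    real \<times> real \<times> real \<Rightarrow> real \<times> real \<times> real" where
  "Phi2 r \<rho> \<sigma> \<mu> \<delta> \<nu> \<eta> \<gamma> x = (case x of (M, A, U) \<Rightarrow>
     (let S = M + A + U in
      (r * \<rho> * U * exp (- \<sigma> * S) - \<mu> * M,
       (1 - r) * \<rho> * U * exp (- \<sigma> * S) - \<nu> * \<gamma> * M + \<eta> * U - \<delta> * A,
       \<nu> * \<gamma> * M - (\<eta> + \<delta>) * U)))"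

definition regular_equilibrium :: "real \<Rightarrow> real \<Rightarrow> real \<Rightarrow> real \<Rightarrow> real \<Rightarrow> real \<Rightarrow> real \<Rightarrow> real \<Rightarrow>
    real \<times> real \<times> real \<Rightarrow> bool" where
  "regular_equilibrium r \<rho> \<sigma> \<mu> \<delta> \<nu> \<eta> \<gamma> x \<longleftrightarrow>
     (Phi1 r \<rho> \<sigma> \<mu> \<delta> \<nu> \<eta> \<gamma> x = (0, 0, 0) \<and> x \<in> Ma \<gamma>) \<or>
     (Phi2 r \<rho> \<sigma> \<mu> \<delta> \<nu> \<eta> \<gamma> x = (0, 0, 0) \<and> x \<in> Ms \<gamma>)"

end

theory Submission
  imports Defs
begin

text \<open>Everything hinges on the quantity
  \<open>\<Delta> = \<gamma> r \<delta> (\<delta> + \<eta> + \<nu>) - (1 - r) \<mu> (\<delta> + \<eta>)\<close>: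
  \<open>NM - NF\<close> is a positive multiple of \<open>\<Delta>\<close>, and so is the switching function \<open>\<gamma> M - A\<close>
  evaluated at \<open>E1\<close> (resp. \<open>E2\<close>) as soon as \<open>ln NF > 0\<close> (resp. \<open>ln NM > 0\<close>).
  So the side of the switching plane on which each equilibrium lies is the sign of \<open>NM - NF\<close>,
  and for \<open>\<Delta> = 0\<close> the two formulas coincide. That \<open>Ei\<close> is a zero of \<open>Phi_i\<close> is a direct
  computation: the coordinates of \<open>Ei\<close> sum to \<open>S = ln N / \<sigma>\<close> with \<open>N = NF\<close> (resp. \<open>NM\<close>),
  so the nonlinearity \<open>exp (- \<sigma> S)\<close> equals \<open>1 / N\<close> there.\<close>

lemma Rplus3_regions_by_sign:
  assumes "x \<in> Rplus3" and "sgn (\<gamma> * fst x - fst (snd x)) = sgn s"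
  shows "(x \<in> Ps \<gamma> \<longleftrightarrow> s = 0) \<and> (x \<in> Ma \<gamma> \<longleftrightarrow> 0 < s) \<and> (x \<in> Ms \<gamma> \<longleftrightarrow> s < 0)"
proof -
  obtain M A U where x: "x = (M, A, U)" by (cases x)
  have "(\<gamma> * M = A \<longleftrightarrow> s = 0) \<and> (A < \<gamma> * M \<longleftrightarrow> 0 < s) \<and> (\<gamma> * M < A \<longleftrightarrow> s < 0)"
    using assms(2) unfolding x by (auto simp: sgn_if split: if_splits)
  then show ?thesis
    using assms(1) unfolding x Ps_def Ma_def Ms_def by auto
qed

locale natural_system =
  fixes r \<rho> \<sigma> \<mu> \<delta> \<nu> \<eta> \<gamma> :: real
  assumes r_pos: "0 < r" and r_less_1: "r < 1" and rho_pos: "0 < \<rho>" and sigma_pos: "0 < \<sigma>"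
    and mu_pos: "0 < \<mu>" and delta_pos: "0 < \<delta>" and nu_pos: "0 < \<nu>" and eta_pos: "0 < \<eta>"
    and gamma_pos: "0 < \<gamma>"
begin

abbreviation "nM \<equiv> NM r \<rho> \<sigma> \<mu> \<delta> \<nu> \<eta> \<gamma>"
abbreviation "nF \<equiv> NF r \<rho> \<sigma> \<mu> \<delta> \<nu> \<eta> \<gamma>"
abbreviation "\<theta> \<equiv> thetaM r \<rho> \<sigma> \<mu> \<delta> \<nu> \<eta> \<gamma>"
abbreviation "e1 \<equiv> E1 r \<rho> \<sigma> \<mu> \<delta> \<nu> \<eta> \<gamma>"
abbreviation "e2 \<equiv> E2 r \<rho> \<sigma> \<mu> \<delta> \<nu> \<eta> \<gamma>"
abbreviation "\<Delta> \<equiv> \<gamma> * r * \<delta> * (\<delta> + \<eta> + \<nu>) - (1 - r) * \<mu> * (\<delta> + \<eta>)"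

lemmas params_pos = r_pos rho_pos sigma_pos mu_pos delta_pos nu_pos eta_pos gamma_pos

lemma one_minus_r_pos: "0 < 1 - r"
  using r_less_1 by simp

lemma vartheta_pos: "0 < vartheta r \<mu> \<delta>"
  using params_pos one_minus_r_pos unfolding vartheta_def by (simp add: add_pos_pos)

lemma NM_pos: "0 < nM"
  using params_pos unfolding NM_def by simp

lemma NF_pos: "0 < nF"
  using params_pos one_minus_r_pos unfolding NF_def by simp

lemma NM_minus_NF: "nM - nF = \<rho> * \<nu> / (\<mu> * \<delta> * (\<delta> + \<eta>) * (\<delta> + \<eta> + \<nu>)) * \<Delta>"
  using params_pos unfolding NM_def NF_def by (simp add: divide_simps) (simp add: algebra_simps)

lemma sgn_NM_minus_NF: "sgn (nM - nF) = sgn \<Delta>"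
  using params_pos unfolding NM_minus_NF sgn_mult by simp

lemma exp_neg_ln_div: "0 < x \<Longrightarrow> exp (- \<sigma> * (ln x / \<sigma>)) = 1 / x"
  using sigma_pos by (simp add: exp_minus inverse_eq_divide)

lemma E1_components:
  "e1 = (r * \<delta> / vartheta r \<mu> \<delta> * (ln nF / \<sigma>),
         (1 - r) * \<mu> * (\<delta> + \<eta>) / ((\<delta> + \<eta> + \<nu>) * vartheta r \<mu> \<delta>) * (ln nF / \<sigma>),
         (1 - r) * \<mu> * \<nu> / ((\<delta> + \<eta> + \<nu>) * vartheta r \<mu> \<delta>) * (ln nF / \<sigma>))"
  unfolding E1_def Let_def by simp

lemma E1_switching_value:
  "\<gamma> * fst e1 - fst (snd e1) = ln nF / (\<sigma> * vartheta r \<mu> \<delta> * (\<delta> + \<eta> + \<nu>)) * \<Delta>"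
proof -
  define s where "s = \<delta> + \<eta> + \<nu>"
  have "s \<noteq> 0" "vartheta r \<mu> \<delta> \<noteq> 0"
    using params_pos vartheta_pos unfolding s_def by auto
  then show ?thesis
    unfolding E1_components s_def[symmetric] using sigma_pos by (simp add: field_simps)
qed

lemma E1_in_Rplus3: "1 \<le> nF \<Longrightarrow> e1 \<in> Rplus3"
  using params_pos one_minus_r_pos vartheta_pos unfolding E1_components Rplus3_def by simp

lemma E1_regions:
  assumes "1 < nF"
  shows "(e1 \<in> Ps \<gamma> \<longleftrightarrow> nM = nF) \<and> (e1 \<in> Ma \<gamma> \<longleftrightarrow> nF < nM) \<and> (e1 \<in> Ms \<gamma> \<longleftrightarrow> nM < nF)"
proof -
  have pos: "0 < ln nF / (\<sigma> * vartheta r \<mu> \<delta> * (\<delta> + \<eta> + \<nu>))"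
    using assms params_pos vartheta_pos by simp
  have "sgn (\<gamma> * fst e1 - fst (snd e1)) = sgn (nM - nF)"
    unfolding E1_switching_value sgn_NM_minus_NF sgn_mult sgn_pos[OF pos] by simp
  then show ?thesis
    using Rplus3_regions_by_sign[OF E1_in_Rplus3] assms by fastforce
qed

lemma Phi1_E1: "Phi1 r \<rho> \<sigma> \<mu> \<delta> \<nu> \<eta> \<gamma> e1 = (0, 0, 0)"
proof -
  define s where "s = \<delta> + \<eta> + \<nu>"
  define t where "t = vartheta r \<mu> \<delta>"
  define L where "L = ln nF / \<sigma>"
  have nz: "s \<noteq> 0" "t \<noteq> 0" "1 - r \<noteq> 0"
    using params_pos vartheta_pos one_minus_r_pos unfolding s_def t_def by auto
  have e1: "e1 = (r * \<delta> / t * L, (1 - r) * \<mu> * (s - \<nu>) / (s * t) * L, (1 - r) * \<mu> * \<nu> / (s * t) * L)"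
    unfolding E1_components s_def t_def L_def by simp
  have "r * \<delta> / t * L + (1 - r) * \<mu> * (s - \<nu>) / (s * t) * L + (1 - r) * \<mu> * \<nu> / (s * t) * L
      = (r * \<delta> + (1 - r) * \<mu>) / t * L"
    using nz by (simp add: field_simps)
  also have "\<dots> = L"
    using nz unfolding t_def vartheta_def by (simp add: add.commute)
  finally have total: "r * \<delta> / t * L + (1 - r) * \<mu> * (s - \<nu>) / (s * t) * L
      + (1 - r) * \<mu> * \<nu> / (s * t) * L = L" .
  have exp_total: "exp (- \<sigma> * L) = \<delta> * s / ((1 - r) * \<rho> * \<nu>)"
    unfolding L_def exp_neg_ln_div[OF NF_pos] unfolding NF_def s_def by simp
  have "\<eta> + \<delta> = s - \<nu>"
    unfolding s_def by simp
  then show ?thesis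
    unfolding e1 Phi1_def Let_def prod.case total exp_total
    using nz params_pos by (simp add: field_simps) (simp add: s_def algebra_simps)
qed

lemma E1_regular_equilibrium:
  "1 < nF \<Longrightarrow> nF < nM \<Longrightarrow> regular_equilibrium r \<rho> \<sigma> \<mu> \<delta> \<nu> \<eta> \<gamma> e1"
  unfolding regular_equilibrium_def using Phi1_E1 E1_regions by simp

lemma E2_denominator: "\<gamma> * \<nu> * \<theta> + \<eta> + \<delta> = (\<delta> + \<eta>) * vartheta r \<mu> \<delta> / (r * \<delta>)"
  using params_pos unfolding thetaM_def vartheta_def by (simp add: field_simps)

lemma E2_components:
  "e2 = (r * \<delta> / vartheta r \<mu> \<delta> * (ln nM / \<sigma>),
         ((1 - r) * \<mu> - \<gamma> * \<nu> * r * \<delta> / (\<delta> + \<eta>)) / vartheta r \<mu> \<delta> * (ln nM / \<sigma>),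
         \<gamma> * \<nu> * r * \<delta> / ((\<delta> + \<eta>) * vartheta r \<mu> \<delta>) * (ln nM / \<sigma>))"
proof -
  define e where "e = \<delta> + \<eta>"
  define t where "t = vartheta r \<mu> \<delta>"
  have "e \<noteq> 0" "t \<noteq> 0"
    using params_pos vartheta_pos unfolding e_def t_def by auto
  moreover have D: "\<gamma> * \<nu> * \<theta> + \<eta> + \<delta> = e * t / (r * \<delta>)"
    unfolding e_def t_def by (rule E2_denominator)
  moreover have A: "\<gamma> * \<nu> * (\<theta> - 1) = (1 - r) * \<mu> * e / (r * \<delta>) - \<gamma> * \<nu>"
    using params_pos unfolding thetaM_def e_def by (simp add: field_simps)
  ultimately show ?thesis
    unfolding E2_def Let_def D A e_def[symmetric] t_def[symmetric]
    using params_pos by (simp add: field_simps)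
qed

lemma E2_switching_value:
  "\<gamma> * fst e2 - fst (snd e2) = ln nM / (\<sigma> * vartheta r \<mu> \<delta> * (\<delta> + \<eta>)) * \<Delta>"
proof -
  define e where "e = \<delta> + \<eta>"
  have "e \<noteq> 0" "vartheta r \<mu> \<delta> \<noteq> 0"
    using params_pos vartheta_pos unfolding e_def by auto
  then show ?thesis
    unfolding E2_components e_def[symmetric] using params_pos by (simp add: field_simps)
qed

lemma E2_in_Rplus3:
  assumes "1 \<le> nM" and "1 \<le> \<theta>"
  shows "e2 \<in> Rplus3"
proof -
  have "0 < \<gamma> * \<nu> * \<theta> + \<eta> + \<delta>"
    using params_pos vartheta_pos unfolding E2_denominator by simp
  then show ?thesis
    using assms params_pos unfolding E2_def Let_def Rplus3_def by simp
qed

lemma E2_regions: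
  assumes "1 < nM" and "1 < \<theta>"
  shows "(e2 \<in> Ps \<gamma> \<longleftrightarrow> nM = nF) \<and> (e2 \<in> Ma \<gamma> \<longleftrightarrow> nF < nM) \<and> (e2 \<in> Ms \<gamma> \<longleftrightarrow> nM < nF)"
proof -
  have pos: "0 < ln nM / (\<sigma> * vartheta r \<mu> \<delta> * (\<delta> + \<eta>))"
    using assms params_pos vartheta_pos by simp
  have "sgn (\<gamma> * fst e2 - fst (snd e2)) = sgn (nM - nF)"
    unfolding E2_switching_value sgn_NM_minus_NF sgn_mult sgn_pos[OF pos] by simp
  then show ?thesis
    using Rplus3_regions_by_sign[OF E2_in_Rplus3] assms by fastforce
qed

lemma Phi2_E2: "Phi2 r \<rho> \<sigma> \<mu> \<delta> \<nu> \<eta> \<gamma> e2 = (0, 0, 0)"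
proof -
  define e where "e = \<delta> + \<eta>"
  define t where "t = vartheta r \<mu> \<delta>"
  define L where "L = ln nM / \<sigma>"
  have nz: "e \<noteq> 0" "t \<noteq> 0"
    using params_pos vartheta_pos unfolding e_def t_def by auto
  have e2: "e2 = (r * \<delta> / t * L, ((1 - r) * \<mu> - \<gamma> * \<nu> * r * \<delta> / e) / t * L,
                  \<gamma> * \<nu> * r * \<delta> / (e * t) * L)"
    unfolding E2_components e_def t_def L_def by simp
  have "r * \<delta> / t * L + ((1 - r) * \<mu> - \<gamma> * \<nu> * r * \<delta> / e) / t * L + \<gamma> * \<nu> * r * \<delta> / (e * t) * L
      = (r * \<delta> + (1 - r) * \<mu>) / t * L"
    using nz by (simp add: field_simps)
  also have "\<dots> = L"
    using nz unfolding t_def vartheta_def by (simp add: add.commute)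
  finally have total: "r * \<delta> / t * L + ((1 - r) * \<mu> - \<gamma> * \<nu> * r * \<delta> / e) / t * L
      + \<gamma> * \<nu> * r * \<delta> / (e * t) * L = L" .
  have exp_total: "exp (- \<sigma> * L) = \<mu> * e / (\<gamma> * r * \<rho> * \<nu>)"
    unfolding L_def exp_neg_ln_div[OF NM_pos] unfolding NM_def e_def by simp
  have "\<eta> + \<delta> = e"
    unfolding e_def by simp
  then show ?thesis
    unfolding e2 Phi2_def Let_def prod.case total exp_total
    using nz params_pos by (simp add: field_simps) (simp add: e_def algebra_simps)
qed

lemma E2_regular_equilibrium:
  "1 < nM \<Longrightarrow> 1 < \<theta> \<Longrightarrow> nM < nF \<Longrightarrow> regular_equilibrium r \<rho> \<sigma> \<mu> \<delta> \<nu> \<eta> \<gamma> e2"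
  unfolding regular_equilibrium_def using Phi2_E2 E2_regions by simp

lemma E1_eq_E2:
  assumes "nM = nF"
  shows "e1 = e2"
proof -
  define e where "e = \<delta> + \<eta>"
  define s where "s = e + \<nu>"
  define t where "t = vartheta r \<mu> \<delta>"
  have nz: "e \<noteq> 0" "s \<noteq> 0" "t \<noteq> 0"
    using params_pos vartheta_pos unfolding e_def s_def t_def by auto
  have "\<Delta> = 0"
    using assms sgn_NM_minus_NF by (simp add: sgn_0_0)
  then have balance: "(1 - r) * \<mu> = \<gamma> * r * \<delta> * s / e"
    using nz unfolding s_def e_def by (simp add: field_simps)
  show ?thesis
    unfolding E1_components E2_components assms e_def[symmetric] s_def[symmetric] t_def[symmetric]
      balance
    using nz params_pos by (simp add: field_simps) (simp add: s_def algebra_simps)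
qed

end

theorem mainTheorem6:
  fixes r \<rho> \<sigma> \<mu> \<delta> \<nu> \<eta> \<gamma> :: real
  assumes "0 < r" "r < 1" "0 < \<rho>" "0 < \<sigma>" "0 < \<mu>" "0 < \<delta>" "0 < \<nu>" "0 < \<eta>" "1 \<le> \<gamma>"
  defines "nM \<equiv> NM r \<rho> \<sigma> \<mu> \<delta> \<nu> \<eta> \<gamma>"
      and "nF \<equiv> NF r \<rho> \<sigma> \<mu> \<delta> \<nu> \<eta> \<gamma>"
      and "\<theta> \<equiv> thetaM r \<rho> \<sigma> \<mu> \<delta> \<nu> \<eta> \<gamma>"
      and "e1 \<equiv> E1 r \<rho> \<sigma> \<mu> \<delta> \<nu> \<eta> \<gamma>"
      and "e2 \<equiv> E2 r \<rho> \<sigma> \<mu> \<delta> \<nu> \<eta> \<gamma>"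
  shows "(nF > 1 \<longrightarrow>
            (e1 \<in> Ps \<gamma> \<longleftrightarrow> nM = nF) \<and>
            (e1 \<in> Ma \<gamma> \<longleftrightarrow> nM > nF) \<and>
            (e1 \<in> Ms \<gamma> \<longleftrightarrow> nM < nF))
       \<and> (nM > 1 \<and> \<theta> > 1 \<longrightarrow>
            (e2 \<in> Ps \<gamma> \<longleftrightarrow> nM = nF) \<and>
            (e2 \<in> Ms \<gamma> \<longleftrightarrow> nF > nM) \<and>
            (e2 \<in> Ma \<gamma> \<longleftrightarrow> nM > nF))
       \<and> (nM = nF \<and> nF > 1 \<longrightarrow> e1 = e2 \<and> e1 \<in> Ps \<gamma>)
       \<and> (nM > nF \<and> nF > 1 \<longrightarrow> regular_equilibrium r \<rho> \<sigma> \<mu> \<delta> \<nu> \<eta> \<gamma> e1)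
       \<and> (nF > nM \<and> nM > 1 \<and> \<theta> > 1 \<longrightarrow> regular_equilibrium r \<rho> \<sigma> \<mu> \<delta> \<nu> \<eta> \<gamma> e2)"
proof -
  have sys: "natural_system r \<rho> \<sigma> \<mu> \<delta> \<nu> \<eta> \<gamma>"
    using assms(1-9) by unfold_locales auto
  show ?thesis
    unfolding nM_def nF_def \<theta>_def e1_def e2_def
    using natural_system.E1_regions[OF sys] natural_system.E2_regions[OF sys]
      natural_system.E1_eq_E2[OF sys]
      natural_system.E1_regular_equilibrium[OF sys] natural_system.E2_regular_equilibrium[OF sys]
    by auto
qed

end
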